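(* Let $D$ be a commutative $k$-algebra satisfying the sensitive multiplicity condition, let $\sigma$ be an automorphism of $D$ which is not locally algebraic, and let $a\in D$. Then $\operatorname{GKdim}(D(\sigma,a))\geq \operatorname{GKdim}(D)+2$.
   Context: $k$ is a field. The generalized Weyl algebra $D(\sigma,a)$ (for $a$ central) is generated by $D$ and indeterminates $x,y$ with $xd=\sigma(d)x$, $yd=\sigma^{-1}(d)y$ ($d\in D$), $yx=a$, $xy=\sigma(a)$. $\operatorname{GKdim}(B)=\sup_V\limsup_{n\to\infty}\log_n\dim_k(\sum_{i=0}^nV^i)$. An element $r$ of an algebra $B$ is regular if $rb\neq0$ and $br\neq0$ for all $0\neq b\in B$. An algebra $B$ with $\operatorname{GKdim}(B)=d$ satisfies $\mathrm{SM}(V_0,c,d)$, for a finite-dimensional subspace $V_0\subseteq B$ and a constant $c>0$, if for every finite-dimensional subspace $W\subseteq B$ with $V_0r\subseteq W$ for some regular element $r\in B$ one has $\dim(W^m)\geq c\dim(W)m^d$ for all $m\in\mathbb{N}$ (here $W^0=k$). $B$ satisfies the sensitive multiplicity condition if it satisfies $\mathrm{SM}(V_0,c,d)$ for some such $V_0$ and $c$, where $d=\operatorname{GKdim}(B)$. An automorphism $\sigma$ is locally algebraic if every finite-dimensional subspace lies in a finite-dimensional $\sigma$-stable subspace. *)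

theory Defs
  imports Complex_Main "HOL-Library.Liminf_Limsup" "HOL-Library.Extended_Real"
begin

definition is_k_algebra :: "('k::field \<Rightarrow> 'b::ring_1 \<Rightarrow> 'b) \<Rightarrow> bool" where
  "is_k_algebra s \<longleftrightarrow> vector_space s \<and>
     (\<forall>c u v. s c (u * v) = s c u * v \<and> s c (u * v) = u * s c v)"

definition fd_subspace :: "('k::field \<Rightarrow> 'b::ring_1 \<Rightarrow> 'b) \<Rightarrow> 'b set \<Rightarrow> bool" where
  "fd_subspace s V \<longleftrightarrow> (\<exists>B. finite B \<and> V = module.span s B)"

definition sub_prod :: "('k::field \<Rightarrow> 'b::ring_1 \<Rightarrow> 'b) \<Rightarrow> 'b set \<Rightarrow> 'b set \<Rightarrow> 'b set" where
  "sub_prod s V W = module.span s {v * w | v w. v \<in> V \<and> w \<in> W}"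

fun sub_pow :: "('k::field \<Rightarrow> 'b::ring_1 \<Rightarrow> 'b) \<Rightarrow> 'b set \<Rightarrow> nat \<Rightarrow> 'b set" where
  "sub_pow s V 0 = module.span s {1}"
| "sub_pow s V (Suc n) = sub_prod s (sub_pow s V n) V"

definition sub_pow_sum :: "('k::field \<Rightarrow> 'b::ring_1 \<Rightarrow> 'b) \<Rightarrow> 'b set \<Rightarrow> nat \<Rightarrow> 'b set" where
  "sub_pow_sum s V n = module.span s (\<Union>i\<in>{0..n}. sub_pow s V i)"

definition GKdim :: "('k::field \<Rightarrow> 'b::ring_1 \<Rightarrow> 'b) \<Rightarrow> ereal" where
  "GKdim s = (SUP V \<in> {V. fd_subspace s V}.
      limsup (\<lambda>n. ereal (log (real n) (real (vector_space.dim s (sub_pow_sum s V n))))))"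

definition regular_elem :: "'b::ring_1 \<Rightarrow> bool" where
  "regular_elem r \<longleftrightarrow> (\<forall>b. b \<noteq> 0 \<longrightarrow> r * b \<noteq> 0 \<and> b * r \<noteq> 0)"

definition SM :: "('k::field \<Rightarrow> 'b::ring_1 \<Rightarrow> 'b) \<Rightarrow> 'b set \<Rightarrow> real \<Rightarrow> real \<Rightarrow> bool" where
  "SM s V0 c d \<longleftrightarrow> fd_subspace s V0 \<and> c > 0 \<and>
     (\<forall>W r. fd_subspace s W \<and> regular_elem r \<and> {v * r | v. v \<in> V0} \<subseteq> W \<longrightarrow>
        (\<forall>m::nat. real (vector_space.dim s (sub_pow s W m))
                   \<ge> c * real (vector_space.dim s W) * real m powr d))"

definition sensitive_multiplicity :: "('k::field \<Rightarrow> 'b::ring_1 \<Rightarrow> 'b) \<Rightarrow> bool" where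
  "sensitive_multiplicity s \<longleftrightarrow>
     (\<exists>d::real. GKdim s = ereal d \<and> (\<exists>V0 c. SM s V0 c d))"

definition k_alg_hom :: "('k::field \<Rightarrow> 'a::ring_1 \<Rightarrow> 'a) \<Rightarrow> ('k \<Rightarrow> 'b::ring_1 \<Rightarrow> 'b)
     \<Rightarrow> ('a \<Rightarrow> 'b) \<Rightarrow> bool" where
  "k_alg_hom s1 s2 f \<longleftrightarrow> Vector_Spaces.linear s1 s2 f \<and>
     (\<forall>u v. f (u * v) = f u * f v) \<and> f 1 = 1"

definition k_alg_automorphism :: "('k::field \<Rightarrow> 'a::ring_1 \<Rightarrow> 'a) \<Rightarrow> ('a \<Rightarrow> 'a) \<Rightarrow> bool" where
  "k_alg_automorphism s f \<longleftrightarrow> k_alg_hom s s f \<and> bij f"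

definition locally_algebraic :: "('k::field \<Rightarrow> 'a::ring_1 \<Rightarrow> 'a) \<Rightarrow> ('a \<Rightarrow> 'a) \<Rightarrow> bool" where
  "locally_algebraic s f \<longleftrightarrow>
     (\<forall>V. fd_subspace s V \<longrightarrow> (\<exists>W. fd_subspace s W \<and> V \<subseteq> W \<and> f ` W \<subseteq> W))"

definition subalgebra :: "('k::field \<Rightarrow> 'b::ring_1 \<Rightarrow> 'b) \<Rightarrow> 'b set \<Rightarrow> bool" where
  "subalgebra s S \<longleftrightarrow> module.subspace s S \<and> 1 \<in> S \<and> (\<forall>u\<in>S. \<forall>v\<in>S. u * v \<in> S)"

definition generates :: "('k::field \<Rightarrow> 'b::ring_1 \<Rightarrow> 'b) \<Rightarrow> 'b set \<Rightarrow> bool" where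
  "generates s G \<longleftrightarrow> (\<forall>S. subalgebra s S \<and> G \<subseteq> S \<longrightarrow> S = UNIV)"

definition gwa_mon :: "'b::ring_1 \<Rightarrow> 'b \<Rightarrow> int \<Rightarrow> 'b" where
  "gwa_mon x y n = (if n \<ge> 0 then x ^ nat n else y ^ nat (- n))"

text \<open>(B, iota, x, y) is (a copy of) the generalized Weyl algebra D(sigma, a):
  B is a k-algebra containing D via the embedding iota, generated by iota(D), x, y
  subject to the defining relations, and with no further relations, i.e. the
  standard monomials are left-linearly independent over D.\<close>
definition is_GWA :: "('k::field \<Rightarrow> 'd::comm_ring_1 \<Rightarrow> 'd) \<Rightarrow> ('d \<Rightarrow> 'd) \<Rightarrow> 'd
     \<Rightarrow> ('k \<Rightarrow> 'b::ring_1 \<Rightarrow> 'b) \<Rightarrow> ('d \<Rightarrow> 'b) \<Rightarrow> 'b \<Rightarrow> 'b \<Rightarrow> bool" where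
  "is_GWA sD \<sigma> a sB \<iota> x y \<longleftrightarrow>
     is_k_algebra sB \<and> k_alg_hom sD sB \<iota> \<and> inj \<iota> \<and>
     (\<forall>d. x * \<iota> d = \<iota> (\<sigma> d) * x) \<and>
     (\<forall>d. y * \<iota> d = \<iota> (inv \<sigma> d) * y) \<and>
     y * x = \<iota> a \<and> x * y = \<iota> (\<sigma> a) \<and>
     generates sB (range \<iota> \<union> {x, y}) \<and>
     (\<forall>F f. finite F \<and> (\<Sum>n\<in>F. \<iota> (f n) * gwa_mon x y n) = 0 \<longrightarrow> (\<forall>n\<in>F. f n = 0))"

end

theory Submission
  imports Defs "HOL-Real_Asymp.Real_Asymp"
begin

(* Choose a finite set X in D whose span contains both the subspace V0 of the sensitive
   multiplicity condition and a finite-dimensional subspace lying in no \<sigma>-stable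
   finite-dimensional subspace, and let U_n = span (X \<union> \<sigma> X \<union> ... \<union> \<sigma>^(n-1) X).
   The U_n strictly increase, so dim U_n \<ge> n, and SM (with the regular element 1) gives
   dim (U_n^n) \<ge> c n^(d+1). Since x^l \<iota>(u) = \<iota>(\<sigma>^l u) x^l and D is commutative,
   \<iota>(u) x^l lies in V^(n+l) for u in U_n^n and l \<ge> n, where V = span (\<iota> X \<union> {x}).
   The \<iota>(b) x^l, for b in a basis and distinct l, are linearly independent in the generalized
   Weyl algebra, so taking n \<le> l \<le> 2n gives dim (V^0 + ... + V^(3n)) \<ge> c n^(d+2). *)

lemma linear_subspace_vimage:
  "Vector_Spaces.linear s1 s2 f \<Longrightarrow> module.subspace s2 S \<Longrightarrow> module.subspace s1 (f -` S)"
  by (simp add: module_hom.subspace_vimage module_hom_iff_linear)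

definition orbit_span :: "('k::field \<Rightarrow> 'a::ab_group_add \<Rightarrow> 'a) \<Rightarrow> ('a \<Rightarrow> 'a) \<Rightarrow> 'a set \<Rightarrow> nat \<Rightarrow> 'a set"
  where "orbit_span s f X j = module.span s (\<Union>l<j. (f ^^ l) ` X)"

context vector_space
begin

lemma card_le_dim_finite_span:
  assumes "finite F" "W \<subseteq> span F" "S \<subseteq> W" "independent S"
  shows "card S \<le> dim W"
proof -
  obtain B where B: "B \<subseteq> W" "independent B" "W \<subseteq> span B" "card B = dim W"
    using basis_exists by blast
  have "finite B"
    using independent_span_bound[OF assms(1) B(2)] B(1) assms(2) by blast
  then show ?thesis
    using independent_span_bound[OF _ assms(4)] assms(3) B by fastforce
qed

lemma dim_span_psubset:
  assumes "finite F" "finite G" "span F \<subset> span G"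
  shows "dim F < dim G"
proof -
  obtain B where B: "B \<subseteq> span F" "independent B" "span F \<subseteq> span B" "card B = dim F"
    using basis_exists[of "span F"] by auto
  have "finite B"
    using independent_span_bound[OF assms(1) B(2) B(1)] by blast
  obtain w where w: "w \<in> span G" "w \<notin> span F"
    using assms(3) by blast
  have nwB: "w \<notin> span B"
    using w(2) B(1) span_minimal[OF B(1) subspace_span] by blast
  then have "w \<notin> B"
    using span_base by blast
  have "independent (insert w B)"
    by (rule independent_insertI[OF nwB B(2)])
  moreover have "insert w B \<subseteq> span G"
    using w(1) B(1) assms(3) by blast
  ultimately have "card (insert w B) \<le> dim (span G)"
    by (intro card_le_dim_finite_span[OF assms(2) order_refl])
  moreover have "card (insert w B) = Suc (card B)"
    using \<open>finite B\<close> \<open>w \<notin> B\<close> by simp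
  ultimately show ?thesis
    using B(4) by simp
qed

lemma span_Un_span_left: "span (span A \<union> B) = span (A \<union> B)"
proof -
  have "span A \<union> B \<subseteq> span (A \<union> B)"
    using span_mono[of A "A \<union> B"] span_superset[of "A \<union> B"] by blast
  moreover have "A \<union> B \<subseteq> span (span A \<union> B)"
    using span_superset[of A] span_superset[of "span A \<union> B"] by blast
  ultimately show ?thesis
    unfolding span_eq by blast
qed

lemma orbit_span_Suc:
  "orbit_span scale f X (Suc j) = span (orbit_span scale f X j \<union> (f ^^ j) ` X)"
  unfolding orbit_span_def span_Un_span_left by (simp add: lessThan_Suc Un_commute)

lemma orbit_span_subset_Suc: "orbit_span scale f X j \<subseteq> orbit_span scale f X (Suc j)"
  unfolding orbit_span_Suc using span_superset by blast

lemma span_subset_orbit_span: "0 < j \<Longrightarrow> span X \<subseteq> orbit_span scale f X j"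
  unfolding orbit_span_def by (intro span_mono) force

lemma image_orbit_span_subset:
  assumes "Vector_Spaces.linear scale scale f"
  shows "f ` orbit_span scale f X j \<subseteq> orbit_span scale f X (Suc j)"
proof -
  have "f ` (\<Union>l<j. (f ^^ l) ` X) \<subseteq> (\<Union>l<Suc j. (f ^^ l) ` X)"
    by (force simp: image_UN image_image)
  then have "span (f ` (\<Union>l<j. (f ^^ l) ` X)) \<subseteq> span (\<Union>l<Suc j. (f ^^ l) ` X)"
    by (rule span_mono)
  then show ?thesis
    using module_hom.span_image[of scale scale f] assms
    unfolding orbit_span_def module_hom_iff_linear by simp
qed

lemma dim_orbit_span_ge:
  assumes "Vector_Spaces.linear scale scale f" "finite X"
    and nonstable: "\<And>F. finite F \<Longrightarrow> span X \<subseteq> span F \<Longrightarrow> \<not> f ` span F \<subseteq> span F"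
  shows "j \<le> dim (orbit_span scale f X j)"
proof (induction j)
  case (Suc j)
  let ?F = "\<Union>l<j. (f ^^ l) ` X" and ?G = "\<Union>l<Suc j. (f ^^ l) ` X"
  have "span ?F \<noteq> span ?G"
  proof
    assume eq: "span ?F = span ?G"
    have "span X \<subseteq> span ?F"
      using span_subset_orbit_span[of "Suc j" X f] eq unfolding orbit_span_def by simp
    moreover have "f ` span ?F \<subseteq> span ?F"
      using image_orbit_span_subset[OF assms(1), of X j] eq unfolding orbit_span_def by simp
    ultimately show False
      using nonstable[of ?F] assms(2) by blast
  qed
  then have "dim ?F < dim ?G"
    using orbit_span_subset_Suc[of f X j] assms(2)
    unfolding orbit_span_def by (intro dim_span_psubset) auto
  then show ?case
    using Suc.IH unfolding orbit_span_def by simp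
qed simp

end

lemma fd_subspace_span: "finite F \<Longrightarrow> fd_subspace s (module.span s F)"
  unfolding fd_subspace_def by blast

locale k_algebra = vector_space scale for scale :: "'k::field \<Rightarrow> 'b::ring_1 \<Rightarrow> 'b" +
  assumes scale_mult_left: "scale c (u * v) = scale c u * v"
    and scale_mult_right: "scale c (u * v) = u * scale c v"
begin

lemma linear_mult_left: "Vector_Spaces.linear scale scale (\<lambda>v. u * v)"
  unfolding Vector_Spaces.linear_iff
  using vector_space_axioms by (simp add: distrib_left scale_mult_right)

lemma linear_mult_right: "Vector_Spaces.linear scale scale (\<lambda>v. v * u)"
  unfolding Vector_Spaces.linear_iff
  using vector_space_axioms by (simp add: distrib_right scale_mult_left)

lemma subspace_mult_left_vimage: "subspace S \<Longrightarrow> subspace {v. u * v \<in> S}"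
  using linear_subspace_vimage[OF linear_mult_left] by (simp add: vimage_def)

lemma subspace_mult_right_vimage: "subspace S \<Longrightarrow> subspace {v. v * u \<in> S}"
  using linear_subspace_vimage[OF linear_mult_right] by (simp add: vimage_def)

lemma mult_mem_span_products:
  assumes "p \<in> span P" "q \<in> span Q"
  shows "p * q \<in> span {a * b | a b. a \<in> P \<and> b \<in> Q}"
proof -
  let ?X = "span {a * b | a b. a \<in> P \<and> b \<in> Q}"
  have "a * q \<in> ?X" if "a \<in> P" for a
  proof -
    have "Q \<subseteq> {v. a * v \<in> ?X}"
      using that by (auto intro: span_base)
    then have "span Q \<subseteq> {v. a * v \<in> ?X}"
      by (intro span_minimal subspace_mult_left_vimage subspace_span)
    then show ?thesis
      using assms(2) by blast
  qed
  then have "span P \<subseteq> {u. u * q \<in> ?X}"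
    by (intro span_minimal subspace_mult_right_vimage subspace_span) blast
  then show ?thesis
    using assms(1) by blast
qed

lemma sub_prod_span: "sub_prod scale (span P) (span Q) = span {a * b | a b. a \<in> P \<and> b \<in> Q}"
  unfolding sub_prod_def
proof (rule antisym)
  show "span {v * w |v w. v \<in> span P \<and> w \<in> span Q} \<subseteq> span {a * b |a b. a \<in> P \<and> b \<in> Q}"
    by (intro span_minimal subspace_span) (blast intro: mult_mem_span_products)
  show "span {a * b |a b. a \<in> P \<and> b \<in> Q} \<subseteq> span {v * w |v w. v \<in> span P \<and> w \<in> span Q}"
    by (intro span_mono) (blast intro: span_base)
qed

lemma fd_subspace_sub_prod:
  assumes "fd_subspace scale V" "fd_subspace scale W"
  shows "fd_subspace scale (sub_prod scale V W)"
proof -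
  obtain F G where FG: "finite F" "V = span F" "finite G" "W = span G"
    using assms unfolding fd_subspace_def by blast
  have "{a * b | a b. a \<in> F \<and> b \<in> G} = (\<lambda>(a, b). a * b) ` (F \<times> G)"
    by auto
  then show ?thesis
    unfolding fd_subspace_def FG(2,4) sub_prod_span using FG(1,3) by (metis finite_SigmaI finite_imageI)
qed

lemma fd_subspace_sub_pow: "fd_subspace scale V \<Longrightarrow> fd_subspace scale (sub_pow scale V m)"
proof (induction m)
  case 0
  show ?case
    unfolding fd_subspace_def by (intro exI[of _ "{1}"]) simp
next
  case (Suc m)
  then show ?case
    by (simp add: fd_subspace_sub_prod)
qed

lemma fd_subspace_span_UN:
  assumes "finite I" "\<And>i. i \<in> I \<Longrightarrow> fd_subspace scale (V i)"
  shows "fd_subspace scale (span (\<Union>i\<in>I. V i))"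
proof -
  obtain G where G: "\<And>i. i \<in> I \<Longrightarrow> finite (G i) \<and> V i = span (G i)"
    using assms(2) unfolding fd_subspace_def by metis
  have "span (\<Union>i\<in>I. V i) = span (\<Union>i\<in>I. G i)"
    unfolding span_eq using G span_superset span_mono[of _ "\<Union>i\<in>I. G i"] by (smt (verit) UN_iff subset_iff)
  then show ?thesis
    unfolding fd_subspace_def using assms(1) G by blast
qed

lemma fd_subspace_sub_pow_sum: "fd_subspace scale V \<Longrightarrow> fd_subspace scale (sub_pow_sum scale V n)"
  unfolding sub_pow_sum_def by (intro fd_subspace_span_UN fd_subspace_sub_pow) auto

lemma subspace_sub_pow: "subspace (sub_pow scale W m)"
  by (cases m) (auto simp: sub_prod_def)

lemma mult_mem_sub_pow_Suc: "p \<in> sub_pow scale W m \<Longrightarrow> q \<in> W \<Longrightarrow> p * q \<in> sub_pow scale W (Suc m)"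
  by (auto simp: sub_prod_def intro: span_base)

lemma mult_power_mem_sub_pow:
  "p \<in> sub_pow scale W m \<Longrightarrow> q \<in> W \<Longrightarrow> p * q ^ k \<in> sub_pow scale W (m + k)"
proof (induction k)
  case (Suc k)
  then have "p * q ^ k * q \<in> sub_pow scale W (Suc (m + k))"
    by (intro mult_mem_sub_pow_Suc)
  then show ?case
    by (simp only: power_Suc2 mult.assoc add_Suc_right)
qed simp

lemma sub_pow_zero_Suc: "sub_pow scale {0} (Suc m) = {0}"
proof -
  have "{v * w | v w. v \<in> sub_pow scale {0} m \<and> w \<in> {0}} \<subseteq> {0}"
    by auto
  then have "sub_pow scale {0} (Suc m) \<subseteq> span {0}"
    unfolding sub_pow.simps sub_prod_def by (rule span_mono)
  then show ?thesis
    using subspace_0[OF subspace_sub_pow, of "{0}" "Suc m"] by auto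
qed

lemma dim_sub_pow_orbit_span_ge:
  assumes SM: "SM scale V0 c d" and f: "Vector_Spaces.linear scale scale f"
    and X: "finite X" "V0 \<subseteq> span X"
    and nonstable: "\<And>F. finite F \<Longrightarrow> span X \<subseteq> span F \<Longrightarrow> \<not> f ` span F \<subseteq> span F"
    and n: "1 \<le> n"
  shows "c * real n * real n powr d \<le> real (dim (sub_pow scale (orbit_span scale f X n) n))"
proof -
  let ?U = "orbit_span scale f X n"
  have "fd_subspace scale ?U"
    unfolding orbit_span_def using X(1) by (simp add: fd_subspace_span)
  moreover have "{v * 1 | v. v \<in> V0} \<subseteq> ?U"
    using X(2) span_subset_orbit_span[of n X f] n by auto
  moreover have "regular_elem (1 :: 'b)"
    by (simp add: regular_elem_def)
  ultimately have "c * real (dim ?U) * real n powr d \<le> real (dim (sub_pow scale ?U n))"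
    using SM unfolding SM_def by blast
  moreover have "n \<le> dim ?U"
    by (rule dim_orbit_span_ge[OF f X(1) nonstable])
  moreover have "0 < c"
    using SM unfolding SM_def by blast
  ultimately show ?thesis
    by (smt (verit) mult_right_mono mult_left_mono of_nat_mono powr_ge_zero)
qed

lemma not_locally_algebraicE:
  assumes "\<not> locally_algebraic scale f" "fd_subspace scale V"
  obtains X where "finite X" "V \<subseteq> span X"
    "\<And>F. finite F \<Longrightarrow> span X \<subseteq> span F \<Longrightarrow> \<not> f ` span F \<subseteq> span F"
proof -
  obtain V1 where V1: "fd_subspace scale V1"
    and nonstable: "\<And>W. fd_subspace scale W \<Longrightarrow> V1 \<subseteq> W \<Longrightarrow> \<not> f ` W \<subseteq> W"
    using assms(1) unfolding locally_algebraic_def by blast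
  obtain X0 X1 where X: "finite X0" "V = span X0" "finite X1" "V1 = span X1"
    using assms(2) V1 unfolding fd_subspace_def by blast
  show ?thesis
  proof (rule that[of "X0 \<union> X1"])
    show "finite (X0 \<union> X1)"
      using X by simp
    show "V \<subseteq> span (X0 \<union> X1)"
      unfolding X(2) by (rule span_mono) simp
    show "\<not> f ` span F \<subseteq> span F" if "finite F" "span (X0 \<union> X1) \<subseteq> span F" for F
    proof (rule nonstable)
      show "fd_subspace scale (span F)"
        using that(1) by (rule fd_subspace_span)
      have "span X1 \<subseteq> span (X0 \<union> X1)"
        by (rule span_mono) simp
      then show "V1 \<subseteq> span F"
        using that(2) X(4) by simp
    qed
  qed
qed

end

lemma k_algebraI: "is_k_algebra s \<Longrightarrow> k_algebra s"
  unfolding is_k_algebra_def k_algebra_def k_algebra_axioms_def by blast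

locale comm_k_algebra = k_algebra scale for scale :: "'k::field \<Rightarrow> 'b::comm_ring_1 \<Rightarrow> 'b"
begin

lemma sub_pow_span_Un_subset:
  assumes "\<And>K. subspace (T K)"
    and "\<And>K. sub_pow scale A K \<subseteq> T K"
    and "\<And>K u b. u \<in> T K \<Longrightarrow> b \<in> B \<Longrightarrow> u * b \<in> T (Suc K)"
  shows "sub_pow scale (span (A \<union> B)) M \<subseteq> T M"
  using assms
proof (induction M arbitrary: T)
  case 0
  then show ?case
    using "0.prems"(2)[of 0] by simp
next
  case (Suc M)
  have "p * q \<in> T (Suc M)" if p: "p \<in> sub_pow scale (span (A \<union> B)) M" and q: "q \<in> span (A \<union> B)" for p q
  proof -
    have "A \<union> B \<subseteq> {q. p * q \<in> T (Suc M)}"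
    proof safe
      fix g assume "g \<in> A"
      txt \<open>A factor from A is absorbed by shifting the family T; this needs commutativity.\<close>
      let ?T' = "\<lambda>K. {u. u * g \<in> T (Suc K)}"
      have "p \<in> ?T' M"
      proof (rule Suc.IH[THEN subsetD, OF _ _ _ p])
        show "subspace (?T' K)" for K
          by (intro subspace_mult_right_vimage Suc.prems(1))
        show "sub_pow scale A K \<subseteq> ?T' K" for K
          using Suc.prems(2) mult_mem_sub_pow_Suc \<open>g \<in> A\<close> by blast
        show "u * b \<in> ?T' (Suc K)" if "u \<in> ?T' K" "b \<in> B" for u b K
          using Suc.prems(3)[OF that[simplified]] by (simp add: ac_simps)
      qed
      then show "p * g \<in> T (Suc M)"
        by simp
    next
      fix g assume "g \<in> B"
      then show "p * g \<in> T (Suc M)"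
        using Suc.prems(3) Suc.IH[OF Suc.prems] p by blast
    qed
    then have "span (A \<union> B) \<subseteq> {q. p * q \<in> T (Suc M)}"
      by (intro span_minimal subspace_mult_left_vimage Suc.prems(1))
    then show ?thesis
      using q by blast
  qed
  then show ?case
    unfolding sub_pow.simps sub_prod_def by (intro span_minimal Suc.prems(1)) blast
qed

end

lemma limsup_log_ge_of_growth:
  fixes f :: "nat \<Rightarrow> real" and k :: nat
  assumes "0 < c" "0 < k" and growth: "\<And>n. 1 \<le> n \<Longrightarrow> c * real n powr e \<le> f (k * n)"
  shows "ereal e \<le> limsup (\<lambda>m. ereal (log (real m) (f m)))"
proof -
  let ?g = "\<lambda>n. log (real k * real n) (c * real n powr e)"
  have "0 < real k"
    using assms(2) by simp
  then have "?g \<longlonglongrightarrow> e"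
    using assms(1) by real_asymp
  then have "ereal e = limsup (\<lambda>n. ereal (?g n))"
    by (intro lim_imp_Limsup[symmetric]) (simp_all add: tendsto_ereal)
  also have "\<dots> \<le> limsup (\<lambda>n. ereal (log (real (k * n)) (f (k * n))))"
  proof (rule Limsup_mono)
    show "\<forall>\<^sub>F n in sequentially. ereal (?g n) \<le> ereal (log (real (k * n)) (f (k * n)))"
      using eventually_ge_at_top[of "2::nat"]
    proof eventually_elim
      txt \<open>n \<ge> 2 keeps the base of the logarithm above 1.\<close>
      case (elim n)
      have "1 \<le> real k" "2 \<le> real n"
        using assms(2) elim by simp_all
      then have "1 < real k * real n"
        using mult_mono[of 1 "real k" 2 "real n"] by simp
      moreover have "0 < c * real n powr e"
        using assms(1) elim by simp
      ultimately show ?case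
        using growth[of n] elim by (simp add: log_le_cancel_iff)
    qed
  qed
  also have "\<dots> \<le> limsup (\<lambda>m. ereal (log (real m) (f m)))"
    using limsup_subseq_mono[of "\<lambda>n. k * n" "\<lambda>m. ereal (log (real m) (f m))"] assms(2)
    by (simp add: strict_mono_def o_def)
  finally show ?thesis .
qed

lemma GKdim_ge_of_growth:
  assumes "fd_subspace s V" "0 < c" "0 < k"
    and "\<And>n. 1 \<le> n \<Longrightarrow> c * real n powr e \<le> real (vector_space.dim s (sub_pow_sum s V (k * n)))"
  shows "ereal e \<le> GKdim s"
proof -
  have "ereal e \<le> limsup (\<lambda>m. ereal (log (real m) (real (vector_space.dim s (sub_pow_sum s V m)))))"
    by (rule limsup_log_ge_of_growth[OF assms(2-4)])
  also have "\<dots> \<le> GKdim s"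
    unfolding GKdim_def using assms(1) by (intro SUP_upper) simp
  finally show ?thesis .
qed

locale gen_weyl_algebra =
  D: comm_k_algebra sD + B: k_algebra sB
  for sD :: "'k::field \<Rightarrow> 'd::comm_ring_1 \<Rightarrow> 'd" and sB :: "'k \<Rightarrow> 'b::ring_1 \<Rightarrow> 'b" +
  fixes \<sigma> :: "'d \<Rightarrow> 'd" and a :: 'd and \<iota> :: "'d \<Rightarrow> 'b" and x y :: 'b
  assumes GWA: "is_GWA sD \<sigma> a sB \<iota> x y"
    and linear_sigma: "Vector_Spaces.linear sD sD \<sigma>"
begin

lemma linear_iota: "Vector_Spaces.linear sD sB \<iota>"
  using GWA unfolding is_GWA_def k_alg_hom_def by blast

lemma iota_mult: "\<iota> (u * v) = \<iota> u * \<iota> v"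
  using GWA unfolding is_GWA_def k_alg_hom_def by blast

lemma iota_one: "\<iota> 1 = 1"
  using GWA unfolding is_GWA_def k_alg_hom_def by blast

lemma iota_sum: "\<iota> (\<Sum>i\<in>I. f i) = (\<Sum>i\<in>I. \<iota> (f i))"
  using module_hom.sum[of sD sB \<iota>] linear_iota by (simp add: module_hom_iff_linear)

lemma iota_scale: "\<iota> (sD c u) = sB c (\<iota> u)"
  using linear_iota unfolding Vector_Spaces.linear_iff by blast

lemma gwa_monomials_independent:
  "finite F \<Longrightarrow> (\<Sum>n\<in>F. \<iota> (f n) * gwa_mon x y n) = 0 \<Longrightarrow> n \<in> F \<Longrightarrow> f n = 0"
  using GWA unfolding is_GWA_def by blast

lemma x_pow_mult_iota: "x ^ j * \<iota> u = \<iota> ((\<sigma> ^^ j) u) * x ^ j"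
proof (induction j arbitrary: u)
  case (Suc j)
  have "x ^ Suc j * \<iota> u = x * (\<iota> ((\<sigma> ^^ j) u) * x ^ j)"
    by (simp add: Suc mult.assoc)
  also have "\<dots> = \<iota> ((\<sigma> ^^ Suc j) u) * x ^ Suc j"
    using GWA unfolding is_GWA_def by (simp add: mult.assoc[symmetric])
  finally show ?case .
qed simp

lemma iota_x_pow_coeffs_zero:
  assumes "finite J" "(\<Sum>l\<in>J. \<iota> (h l) * x ^ l) = 0" "l \<in> J"
  shows "h l = 0"
proof -
  have "(\<Sum>k\<in>int ` J. \<iota> (h (nat k)) * gwa_mon x y k) = (\<Sum>l\<in>J. \<iota> (h l) * x ^ l)"
    by (subst sum.reindex) (auto simp: gwa_mon_def inj_on_def)
  then show ?thesis
    using gwa_monomials_independent[of "int ` J" "\<lambda>k. h (nat k)" "int l"] assms by simp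
qed

lemma iota_x_pow_family_independent:
  assumes "D.independent Bs" "finite Bs" "finite I"
    and "(\<Sum>p\<in>Bs \<times> I. sB (f p) (\<iota> (fst p) * x ^ snd p)) = 0" "p \<in> Bs \<times> I"
  shows "f p = 0"
proof -
  have "(\<Sum>p\<in>Bs \<times> I. sB (f p) (\<iota> (fst p) * x ^ snd p))
      = (\<Sum>b\<in>Bs. \<Sum>l\<in>I. \<iota> (sD (f (b, l)) b) * x ^ l)"
    by (simp add: sum.cartesian_product iota_scale B.scale_mult_left case_prod_beta)
  also have "\<dots> = (\<Sum>l\<in>I. \<Sum>b\<in>Bs. \<iota> (sD (f (b, l)) b) * x ^ l)"
    by (rule sum.swap)
  also have "\<dots> = (\<Sum>l\<in>I. \<iota> (\<Sum>b\<in>Bs. sD (f (b, l)) b) * x ^ l)"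
    by (simp add: iota_sum sum_distrib_right)
  finally have "(\<Sum>l\<in>I. \<iota> (\<Sum>b\<in>Bs. sD (f (b, l)) b) * x ^ l) = 0"
    using assms(4) by simp
  then have "(\<Sum>b\<in>Bs. sD (f (b, l)) b) = 0" if "l \<in> I" for l
    using iota_x_pow_coeffs_zero[OF assms(3), of "\<lambda>l. \<Sum>b\<in>Bs. sD (f (b, l)) b"] that by simp
  moreover obtain b l where "p = (b, l)" "b \<in> Bs" "l \<in> I"
    using assms(5) by blast
  ultimately show ?thesis
    using D.independentD[OF assms(1,2) order_refl, of "\<lambda>b. f (b, l)" b] by simp
qed

lemma inj_on_iota_x_pow:
  assumes "D.independent Bs" "finite Bs" "finite I"
  shows "inj_on (\<lambda>p. \<iota> (fst p) * x ^ snd p) (Bs \<times> I)"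
proof (rule inj_onI, rule ccontr)
  fix p q
  assume pq: "p \<in> Bs \<times> I" "q \<in> Bs \<times> I" "\<iota> (fst p) * x ^ snd p = \<iota> (fst q) * x ^ snd q" "p \<noteq> q"
  let ?f = "\<lambda>r. (if r = p then 1 else 0) - (if r = q then 1 else 0)"
  have "(\<Sum>r\<in>Bs \<times> I. sB (?f r) (\<iota> (fst r) * x ^ snd r))
      = \<iota> (fst p) * x ^ snd p - \<iota> (fst q) * x ^ snd q"
    using pq assms(2,3)
    by (simp add: B.scale_left_diff_distrib sum_subtractf if_distrib[of "\<lambda>c. sB c _"] cong: if_cong)
  then have "(\<Sum>r\<in>Bs \<times> I. sB (?f r) (\<iota> (fst r) * x ^ snd r)) = 0"
    using pq(3) by simp
  from iota_x_pow_family_independent[OF assms this pq(1)] show False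
    using pq(4) by simp
qed

lemma independent_iota_x_pow:
  assumes "D.independent Bs" "finite Bs" "finite I"
  shows "B.independent ((\<lambda>p. \<iota> (fst p) * x ^ snd p) ` (Bs \<times> I))"
proof (rule B.independent_if_scalars_zero)
  show "finite ((\<lambda>p. \<iota> (fst p) * x ^ snd p) ` (Bs \<times> I))"
    using assms(2,3) by simp
  fix f t
  assume "(\<Sum>t\<in>(\<lambda>p. \<iota> (fst p) * x ^ snd p) ` (Bs \<times> I). sB (f t) t) = 0"
    and "t \<in> (\<lambda>p. \<iota> (fst p) * x ^ snd p) ` (Bs \<times> I)"
  then show "f t = 0"
    using iota_x_pow_family_independent[OF assms, of "\<lambda>p. f (\<iota> (fst p) * x ^ snd p)"]
    by (auto simp: sum.reindex[OF inj_on_iota_x_pow[OF assms]])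
qed

lemma card_mult_dim_le_dim:
  assumes "fd_subspace sB W" "finite I" "\<And>u l. u \<in> P \<Longrightarrow> l \<in> I \<Longrightarrow> \<iota> u * x ^ l \<in> W"
  shows "card I * D.dim P \<le> B.dim W"
proof -
  obtain Bs where Bs: "Bs \<subseteq> P" "D.independent Bs" "card Bs = D.dim P"
    using D.basis_exists by metis
  show ?thesis
  proof (cases "finite Bs")
    case False
    then show ?thesis
      using Bs(3) by simp
  next
    case True
    let ?S = "(\<lambda>p. \<iota> (fst p) * x ^ snd p) ` (Bs \<times> I)"
    obtain F where "finite F" "W = B.span F"
      using assms(1) unfolding fd_subspace_def by blast
    moreover have "?S \<subseteq> W"
      using assms(3) Bs(1) by auto
    ultimately have "card ?S \<le> B.dim W"
      using B.card_le_dim_finite_span independent_iota_x_pow[OF Bs(2) True assms(2)] by blast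
    then show ?thesis
      using Bs(3) card_image[OF inj_on_iota_x_pow[OF Bs(2) True assms(2)]]
      by (simp add: card_cartesian_product mult.commute)
  qed
qed

lemma subspace_iota_mult_vimage: "B.subspace S \<Longrightarrow> D.subspace {u. \<iota> u * w \<in> S}"
  using linear_subspace_vimage[OF Vector_Spaces.linear_compose[OF linear_iota B.linear_mult_right]]
  by (simp add: vimage_def)

lemma iota_mult_sigma_pow_mult_x_pow: "\<iota> (u * (\<sigma> ^^ j) v) * x ^ j = \<iota> u * x ^ j * \<iota> v"
  by (simp add: iota_mult x_pow_mult_iota mult.assoc)

lemma iota_orbit_span_pow_mult_x_pow:
  assumes "u \<in> sub_pow sD (orbit_span sD \<sigma> X j) M"
  shows "\<iota> u * x ^ j \<in> sub_pow sB (B.span (\<iota> ` X \<union> {x})) (M + j)"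
proof -
  define V where "V = B.span (\<iota> ` X \<union> {x})"
  define T where "T j M = {u. \<iota> u * x ^ j \<in> sub_pow sB V (M + j)}" for j M
  have x_in_V: "x \<in> V"
    unfolding V_def by (intro B.span_base) simp
  have T_subspace: "D.subspace (T j M)" for j M
    unfolding T_def by (intro subspace_iota_mult_vimage B.subspace_sub_pow)
  have T_mult: "u * (\<sigma> ^^ j) v \<in> T j (Suc K)" if "u \<in> T j K" "v \<in> X" for u v j K
  proof -
    have "\<iota> v \<in> V"
      unfolding V_def using that(2) by (intro B.span_base) simp
    then show ?thesis
      using that(1) B.mult_mem_sub_pow_Suc unfolding T_def by (simp add: iota_mult_sigma_pow_mult_x_pow)
  qed
  have "sub_pow sD (orbit_span sD \<sigma> X j) M \<subseteq> T j M" for j M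
  proof (induction j arbitrary: M)
    case 0
    have "1 \<in> T 0 0"
      unfolding T_def by (simp add: iota_one B.span_base)
    moreover have "orbit_span sD \<sigma> X 0 = {0}"
      by (simp add: orbit_span_def)
    ultimately show ?case
      using D.subspace_0[OF T_subspace] D.span_minimal[OF _ T_subspace]
      by (cases M) (simp_all only: D.sub_pow_zero_Suc sub_pow.simps(1), auto)
  next
    case (Suc j)
    have "sub_pow sD (orbit_span sD \<sigma> X (Suc j)) M \<subseteq> T j M"
      unfolding D.orbit_span_Suc
      by (rule D.sub_pow_span_Un_subset[OF T_subspace Suc.IH]) (auto intro: T_mult)
    moreover have "T j M \<subseteq> T (Suc j) M"
    proof
      fix u assume "u \<in> T j M"
      then have "\<iota> u * x ^ j * x \<in> sub_pow sB V (Suc (M + j))"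
        using B.mult_mem_sub_pow_Suc x_in_V unfolding T_def by blast
      then show "u \<in> T (Suc j) M"
        unfolding T_def by (simp only: mem_Collect_eq power_Suc2 add_Suc_right mult.assoc)
    qed
    ultimately show ?case
      by blast
  qed
  then show ?thesis
    using assms unfolding T_def V_def by blast
qed

lemma card_mult_dim_sub_pow_orbit_span_le:
  assumes "finite X"
  shows "(n + 1) * D.dim (sub_pow sD (orbit_span sD \<sigma> X n) n)
    \<le> B.dim (sub_pow_sum sB (B.span (\<iota> ` X \<union> {x})) (3 * n))"
proof -
  let ?V = "B.span (\<iota> ` X \<union> {x})"
  have "card {n..2 * n} * D.dim (sub_pow sD (orbit_span sD \<sigma> X n) n) \<le> B.dim (sub_pow_sum sB ?V (3 * n))"
  proof (rule card_mult_dim_le_dim)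
    show "fd_subspace sB (sub_pow_sum sB ?V (3 * n))"
      using assms by (simp add: B.fd_subspace_sub_pow_sum fd_subspace_span)
    fix u l
    assume "u \<in> sub_pow sD (orbit_span sD \<sigma> X n) n" "l \<in> {n..2 * n}"
    then have "\<iota> u * x ^ n * x ^ (l - n) \<in> sub_pow sB ?V (n + n + (l - n))"
      using B.mult_power_mem_sub_pow iota_orbit_span_pow_mult_x_pow B.span_base[of x] by blast
    moreover have "n + n + (l - n) \<in> {0..3 * n}" "\<iota> u * x ^ n * x ^ (l - n) = \<iota> u * x ^ l"
      using \<open>l \<in> {n..2 * n}\<close> by (auto simp: mult.assoc power_add[symmetric])
    ultimately show "\<iota> u * x ^ l \<in> sub_pow_sum sB ?V (3 * n)"
      unfolding sub_pow_sum_def by (intro B.span_base) auto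
  qed simp
  then show ?thesis
    by simp
qed

lemma dim_sub_pow_sum_growth:
  assumes SM: "SM sD V0 c d" and X: "finite X" "V0 \<subseteq> D.span X"
    and nonstable: "\<And>F. finite F \<Longrightarrow> D.span X \<subseteq> D.span F \<Longrightarrow> \<not> \<sigma> ` D.span F \<subseteq> D.span F"
    and n: "1 \<le> n"
  shows "c * real n powr (d + 2) \<le> real (B.dim (sub_pow_sum sB (B.span (\<iota> ` X \<union> {x})) (3 * n)))"
proof -
  let ?P = "sub_pow sD (orbit_span sD \<sigma> X n) n"
  have "0 < c"
    using SM unfolding SM_def by blast
  have "c * real n powr (d + 2) = c * (real n * real n * real n powr d)"
    using n by (simp add: powr_add power2_eq_square)
  also have "\<dots> \<le> (real n + 1) * (c * real n * real n powr d)"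
    using \<open>0 < c\<close> by (simp add: mult_left_mono mult_right_mono ac_simps)
  also have "\<dots> \<le> (real n + 1) * real (D.dim ?P)"
    using D.dim_sub_pow_orbit_span_ge[OF SM linear_sigma X nonstable n] by (intro mult_left_mono) auto
  also have "\<dots> \<le> real (B.dim (sub_pow_sum sB (B.span (\<iota> ` X \<union> {x})) (3 * n)))"
    using card_mult_dim_sub_pow_orbit_span_le[OF X(1), of n] by (metis of_nat_Suc of_nat_le_iff of_nat_mult Suc_eq_plus1 add.commute)
  finally show ?thesis .
qed

end

theorem lemma2p3:
  fixes sD :: "'k::field \<Rightarrow> 'd::comm_ring_1 \<Rightarrow> 'd"
    and sB :: "'k \<Rightarrow> 'b::ring_1 \<Rightarrow> 'b"
    and \<sigma> :: "'d \<Rightarrow> 'd" and a :: 'd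
    and \<iota> :: "'d \<Rightarrow> 'b" and x y :: 'b
  assumes "is_k_algebra sD"
    and "sensitive_multiplicity sD"
    and "k_alg_automorphism sD \<sigma>"
    and "\<not> locally_algebraic sD \<sigma>"
    and "is_GWA sD \<sigma> a sB \<iota> x y"
  shows "GKdim sB \<ge> GKdim sD + 2"
proof -
  have "is_k_algebra sB"
    using assms(5) unfolding is_GWA_def by blast
  moreover have "Vector_Spaces.linear sD sD \<sigma>"
    using assms(3) unfolding k_alg_automorphism_def k_alg_hom_def by blast
  ultimately interpret gen_weyl_algebra sD sB \<sigma> a \<iota> x y
    by (intro gen_weyl_algebra.intro comm_k_algebra.intro gen_weyl_algebra_axioms.intro
        k_algebraI assms(1,5))
  obtain d V0 c where d: "GKdim sD = ereal d" and SM: "SM sD V0 c d"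
    using assms(2) unfolding sensitive_multiplicity_def by blast
  then have "fd_subspace sD V0"
    unfolding SM_def by blast
  then obtain X where X: "finite X" "V0 \<subseteq> D.span X"
    and nonstable: "\<And>F. finite F \<Longrightarrow> D.span X \<subseteq> D.span F \<Longrightarrow> \<not> \<sigma> ` D.span F \<subseteq> D.span F"
    by (rule D.not_locally_algebraicE[OF assms(4)]) blast
  have "ereal (d + 2) \<le> GKdim sB"
  proof (rule GKdim_ge_of_growth)
    show "fd_subspace sB (B.span (\<iota> ` X \<union> {x}))"
      using X(1) by (simp add: fd_subspace_span)
    show "c * real n powr (d + 2) \<le> real (B.dim (sub_pow_sum sB (B.span (\<iota> ` X \<union> {x})) (3 * n)))"
      if "1 \<le> n" for n
      by (rule dim_sub_pow_sum_growth[OF SM X nonstable that])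
    show "0 < c"
      using SM unfolding SM_def by blast
  qed simp
  then show ?thesis
    using d by simp
qed

end
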